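(* Fix $\lambda\in[0,1)$ and a feasible path flow vector $f$, and let $Z(f,\xi)$ be an integrable random cost. For $\alpha\in(\lambda,1)$ define $$\bar\lambda(\alpha,\lambda)=\frac{\alpha-\lambda}{1+\alpha-2\lambda},\qquad \Phi_{\alpha,\lambda}(f)=\big(1-\bar\lambda(\alpha,\lambda)\big)\mathbb{E}[Z(f,\xi)]+\bar\lambda(\alpha,\lambda)\operatorname{CVaR}_\alpha(Z(f,\xi)).$$ Then $\alpha\mapsto\Phi_{\alpha,\lambda}(f)$ is non-decreasing on $(\lambda,1)$.
   Context: $\operatorname{CVaR}_\alpha(Y):=\inf_{\gamma\in\mathbb{R}}\{\gamma+\frac{1}{1-\alpha}\mathbb{E}[(Y-\gamma)_+]\}$. In the paper $Z(f,\xi)$ is the random TSUE system potential at path flows $f$; the case $\lambda<\alpha$ corresponds to a risk-averse traveler. *)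

theory Defs
  imports "HOL-Probability.Probability"
begin

definition CVaR :: "'a measure \<Rightarrow> real \<Rightarrow> ('a \<Rightarrow> real) \<Rightarrow> real" where
  "CVaR M \<alpha> Y = (INF \<gamma>::real. \<gamma> + 1 / (1 - \<alpha>) * (\<integral>x. max (Y x - \<gamma>) 0 \<partial>M))"

definition lambda_bar :: "real \<Rightarrow> real \<Rightarrow> real" where
  "lambda_bar \<alpha> lam = (\<alpha> - lam) / (1 + \<alpha> - 2 * lam)"

definition Phi :: "'a measure \<Rightarrow> real \<Rightarrow> real \<Rightarrow> ('a \<Rightarrow> real) \<Rightarrow> real" where
  "Phi M \<alpha> lam Y =
     (1 - lambda_bar \<alpha> lam) * (\<integral>x. Y x \<partial>M) + lambda_bar \<alpha> lam * CVaR M \<alpha> Y"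

end

theory Submission
  imports Defs
begin

text \<open>Writing \<open>Phi M \<alpha> lam Y = E[Y] + lambda_bar \<alpha> lam * (CVaR M \<alpha> Y - E[Y])\<close>, the level
  \<open>\<alpha>\<close> enters through the product of two nonnegative nondecreasing functions: the weight
  \<open>lambda_bar \<alpha> lam\<close>, and the excess of CVaR over the mean. CVaR dominates the mean and
  is nondecreasing in \<open>\<alpha>\<close> because the Rockafellar--Uryasev objective is, pointwise in
  \<open>\<gamma>\<close>, bounded below by the mean and increasing in the factor \<open>1 / (1 - \<alpha>)\<close>.\<close>

definition CVaR_objective :: "'a measure \<Rightarrow> real \<Rightarrow> ('a \<Rightarrow> real) \<Rightarrow> real \<Rightarrow> real" where
  "CVaR_objective M \<alpha> Y \<gamma> = \<gamma> + 1 / (1 - \<alpha>) * (\<integral>x. max (Y x - \<gamma>) 0 \<partial>M)"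

lemma CVaR_eq_INF_objective: "CVaR M \<alpha> Y = (INF \<gamma>. CVaR_objective M \<alpha> Y \<gamma>)"
  unfolding CVaR_def CVaR_objective_def ..

lemma expectation_le_CVaR_objective:
  fixes Y :: "'a \<Rightarrow> real"
  assumes "prob_space M" and "integrable M Y" and "0 \<le> \<alpha>" and "\<alpha> < 1"
  shows "(\<integral>x. Y x \<partial>M) \<le> CVaR_objective M \<alpha> Y \<gamma>"
proof -
  interpret prob_space M by (rule assms(1))
  let ?excess = "\<integral>x. max (Y x - \<gamma>) 0 \<partial>M"
  have "(\<integral>x. Y x \<partial>M) - \<gamma> = (\<integral>x. Y x - \<gamma> \<partial>M)"
    using assms(2) by (simp add: prob_space)
  also have "\<dots> \<le> ?excess"
    using assms(2) by (intro integral_mono) auto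
  also have "\<dots> \<le> 1 / (1 - \<alpha>) * ?excess"
  proof -
    have "0 \<le> ?excess"
      by (intro integral_nonneg_AE) auto
    moreover have "1 \<le> 1 / (1 - \<alpha>)"
      using assms(3,4) by simp
    ultimately show ?thesis
      using mult_right_mono[of 1 "1 / (1 - \<alpha>)" ?excess] by simp
  qed
  finally show ?thesis
    unfolding CVaR_objective_def by linarith
qed

lemma CVaR_objective_mono_level:
  fixes Y :: "'a \<Rightarrow> real"
  assumes "\<alpha> \<le> \<beta>" and "\<beta> < 1"
  shows "CVaR_objective M \<alpha> Y \<gamma> \<le> CVaR_objective M \<beta> Y \<gamma>"
proof -
  have "1 / (1 - \<alpha>) \<le> 1 / (1 - \<beta>)"
    using assms by (simp add: frac_le)
  then show ?thesis
    unfolding CVaR_objective_def by (intro add_left_mono mult_right_mono integral_nonneg_AE) auto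
qed

lemma bdd_below_CVaR_objective:
  fixes Y :: "'a \<Rightarrow> real"
  assumes "prob_space M" and "integrable M Y" and "0 \<le> \<alpha>" and "\<alpha> < 1"
  shows "bdd_below (range (CVaR_objective M \<alpha> Y))"
  using expectation_le_CVaR_objective[OF assms] by (intro bdd_belowI2) auto

lemma expectation_le_CVaR:
  fixes Y :: "'a \<Rightarrow> real"
  assumes "prob_space M" and "integrable M Y" and "0 \<le> \<alpha>" and "\<alpha> < 1"
  shows "(\<integral>x. Y x \<partial>M) \<le> CVaR M \<alpha> Y"
  unfolding CVaR_eq_INF_objective
  using expectation_le_CVaR_objective[OF assms] by (intro cINF_greatest) auto

lemma CVaR_mono_level:
  fixes Y :: "'a \<Rightarrow> real"
  assumes "prob_space M" and "integrable M Y" and "0 \<le> \<alpha>" and "\<alpha> \<le> \<beta>" and "\<beta> < 1"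
  shows "CVaR M \<alpha> Y \<le> CVaR M \<beta> Y"
  unfolding CVaR_eq_INF_objective
proof (intro cINF_greatest)
  fix \<gamma>
  have "(INF \<gamma>. CVaR_objective M \<alpha> Y \<gamma>) \<le> CVaR_objective M \<alpha> Y \<gamma>"
    using bdd_below_CVaR_objective[OF assms(1-3)] assms(4,5) by (intro cINF_lower) auto
  also have "\<dots> \<le> CVaR_objective M \<beta> Y \<gamma>"
    using CVaR_objective_mono_level assms(4,5) by blast
  finally show "(INF \<gamma>. CVaR_objective M \<alpha> Y \<gamma>) \<le> CVaR_objective M \<beta> Y \<gamma>" .
qed simp

lemma lambda_bar_nonneg:
  assumes "lam < 1" and "lam \<le> \<alpha>"
  shows "0 \<le> lambda_bar \<alpha> lam"
  using assms unfolding lambda_bar_def by simp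

lemma lambda_bar_mono:
  assumes "lam < 1" and "lam \<le> \<alpha>" and "\<alpha> \<le> \<beta>"
  shows "lambda_bar \<alpha> lam \<le> lambda_bar \<beta> lam"
proof -
  have "(\<beta> - lam) * (1 + \<alpha> - 2 * lam) - (\<alpha> - lam) * (1 + \<beta> - 2 * lam) = (\<beta> - \<alpha>) * (1 - lam)"
    by (simp add: algebra_simps)
  moreover have "0 \<le> (\<beta> - \<alpha>) * (1 - lam)"
    using assms by simp
  ultimately have "(\<alpha> - lam) * (1 + \<beta> - 2 * lam) \<le> (\<beta> - lam) * (1 + \<alpha> - 2 * lam)"
    by linarith
  moreover have "0 < 1 + \<alpha> - 2 * lam" and "0 < 1 + \<beta> - 2 * lam"
    using assms by auto
  ultimately show ?thesis
    unfolding lambda_bar_def by (simp add: divide_simps)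
qed

lemma Phi_eq_expectation_plus_weighted_excess:
  "Phi M \<alpha> lam Y = (\<integral>x. Y x \<partial>M) + lambda_bar \<alpha> lam * (CVaR M \<alpha> Y - (\<integral>x. Y x \<partial>M))"
  unfolding Phi_def by (simp add: algebra_simps)

theorem proposition5:
  fixes M :: "'w measure" and Z :: "'f \<Rightarrow> 'w \<Rightarrow> real" and f :: 'f
    and Feas :: "'f set" and lam :: real
  assumes "prob_space M"
    and "f \<in> Feas"
    and "integrable M (Z f)"
    and "0 \<le> lam" and "lam < 1"
  shows "mono_on {lam<..<1} (\<lambda>\<alpha>. Phi M \<alpha> lam (Z f))"
proof (rule mono_onI)
  fix \<alpha> \<beta> assume levels: "\<alpha> \<in> {lam<..<1}" "\<beta> \<in> {lam<..<1}" "\<alpha> \<le> \<beta>"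
  let ?m = "\<integral>x. Z f x \<partial>M"
  have "lambda_bar \<alpha> lam * (CVaR M \<alpha> (Z f) - ?m) \<le> lambda_bar \<beta> lam * (CVaR M \<beta> (Z f) - ?m)"
  proof (rule mult_mono)
    show "lambda_bar \<alpha> lam \<le> lambda_bar \<beta> lam"
      using lambda_bar_mono assms levels by auto
    show "CVaR M \<alpha> (Z f) - ?m \<le> CVaR M \<beta> (Z f) - ?m"
      using CVaR_mono_level[OF assms(1,3)] assms levels by auto
    show "0 \<le> lambda_bar \<beta> lam"
      using lambda_bar_nonneg assms levels by auto
    show "0 \<le> CVaR M \<alpha> (Z f) - ?m"
      using expectation_le_CVaR[OF assms(1,3)] assms levels by auto
  qed
  then show "Phi M \<alpha> lam (Z f) \<le> Phi M \<beta> lam (Z f)"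
    unfolding Phi_eq_expectation_plus_weighted_excess by simp
qed

end
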